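(* Let $R$ be an exchange ring and $\alpha=[a_1\ a_2\ \cdots\ a_n]$ a right unimodular row over $R$ (i.e. $a_1R+\cdots+a_nR=R$), with $n\ge 2$. Then $\alpha$ can be transformed by a finite sequence of elementary column operations to a row $[c_1\ c_2\ \cdots\ c_n]$ such that $c_2$ is a (von Neumann) regular element, $c_2\in Ra_2$, and $c_2R=(1-g)R$ for some idempotent $g\in R$ with $RgR=R$.
   Context: All rings are unital. A ring $R$ is an exchange ring if for every $a\in R$ there is an idempotent $e\in aR$ with $1-e\in(1-a)R$ (equivalently, $R_R$ has the finite exchange property). An element $x\in R$ is regular if $xyx=x$ for some $y\in R$. An elementary column operation on a row $[c_1\ \cdots\ c_n]$ replaces some entry $c_i$ by $c_i+c_jr$ for some $j\neq i$ and $r\in R$. *)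

theory Defs
  imports Main
begin

definition exchange_ring :: "'a::ring_1 itself \<Rightarrow> bool" where
  "exchange_ring _ \<longleftrightarrow>
     (\<forall>a::'a. \<exists>e. e * e = e \<and> (\<exists>r. e = a * r) \<and> (\<exists>s. 1 - e = (1 - a) * s))"

definition idempotent :: "'a::ring_1 \<Rightarrow> bool" where
  "idempotent e \<longleftrightarrow> e * e = e"

definition regular_elem :: "'a::ring_1 \<Rightarrow> bool" where
  "regular_elem x \<longleftrightarrow> (\<exists>y. x * y * x = x)"

definition right_unimodular :: "'a::ring_1 list \<Rightarrow> bool" where
  "right_unimodular as \<longleftrightarrow>
     (\<exists>rs. length rs = length as \<and> (\<Sum>i<length as. as ! i * rs ! i) = 1)"

definition elem_col_op :: "'a::ring_1 list \<Rightarrow> 'a list \<Rightarrow> bool" where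
  "elem_col_op xs ys \<longleftrightarrow>
     (\<exists>i j r. i < length xs \<and> j < length xs \<and> i \<noteq> j \<and>
              ys = xs[i := xs ! i + xs ! j * r])"

definition right_ideal_gen :: "'a::ring_1 \<Rightarrow> 'a set" where
  "right_ideal_gen x = {x * r | r. True}"

definition two_sided_ideal_gen :: "'a::ring_1 \<Rightarrow> 'a set" where
  "two_sided_ideal_gen g = {sum_list (map (\<lambda>(x, y). x * g * y) ps) | ps. True}"

end

theory Submission
  imports Defs
begin

text \<open>
  Write a_j for as ! j, so a = a_1 is the second entry, and pick r_j with sum_j a_j r_j = 1.
  The exchange property for a r_1 yields an idempotent e = a q whose complement f = 1 - e lies
  in the right ideal spanned by the other entries, say f = sum_(j ~= 1) a_j p_j. Adding
  a q (delta_j0 - a_j) to every other column replaces a_j by f a_j, and a_0 by f a_0 + e.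
  Now e + Y, with Y = f a_0 e, and f - Y p_0 lie in the span of the other columns.
  A second use of the exchange property, for f - Y p_0, gives an idempotent k orthogonal to the
  idempotent e + Y, and their join h lies in that span, satisfies aR + hR = R, and is full:
  1 = e + k + Y p_0 s for some s. Subtracting h a from the second column leaves (1 - h) a, and
  a m + h n = 1 gives (1 - h) a m = 1 - h, so (1 - h) a is regular and generates the same
  right ideal as 1 - h.
\<close>

lemma orthogonal_idempotent_join:
  fixes e k :: "'a::ring_1"
  assumes "e * e = e" "k * k = k" "e * k = 0"
  shows "(e + k - k * e) * e = e" "(e + k - k * e) * k = k"
    and "(e + k - k * e) * (e + k - k * e) = e + k - k * e"
proof -
  have "k * e * e = k * e" "k * e * k = 0"
    using assms by (simp_all add: mult.assoc)
  then show "(e + k - k * e) * e = e" "(e + k - k * e) * k = k"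
    using assms by (simp_all add: algebra_simps)
  then show "(e + k - k * e) * (e + k - k * e) = e + k - k * e"
    by (simp add: algebra_simps flip: mult.assoc)
qed

lemma two_sided_ideal_gen_eq_UNIV:
  fixes g :: "'a::ring_1"
  assumes "1 \<in> two_sided_ideal_gen g"
  shows "two_sided_ideal_gen g = UNIV"
proof -
  obtain ps where ps: "1 = sum_list (map (\<lambda>(x, y). x * g * y) ps)"
    using assms unfolding two_sided_ideal_gen_def by blast
  have "z = sum_list (map (\<lambda>(x, y). x * g * y) (map (\<lambda>(x, y). (x, y * z)) ps))" for z
  proof -
    have "z = sum_list (map (\<lambda>(x, y). x * g * y) ps) * z"
      using ps by simp
    also have "\<dots> = sum_list (map (\<lambda>(x, y). x * g * y) (map (\<lambda>(x, y). (x, y * z)) ps))"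
      by (simp flip: sum_list_mult_const add: comp_def case_prod_beta mult.assoc)
    finally show ?thesis .
  qed
  then show ?thesis
    unfolding two_sided_ideal_gen_def by blast
qed

lemma regular_complement_mult:
  fixes h x :: "'a::ring_1"
  assumes "h * h = h" "x * m + h * n = 1"
  shows "regular_elem ((1 - h) * x)"
    and "right_ideal_gen ((1 - h) * x) = right_ideal_gen (1 - h)"
proof -
  have "x * m = 1 - h * n"
    using assms(2) by (simp add: eq_diff_eq)
  then have "(1 - h) * x * m = (1 - h) * (1 - h * n)"
    by (simp add: mult.assoc)
  also have "\<dots> = 1 - h"
    using assms(1) by (simp add: algebra_simps flip: mult.assoc)
  finally have inv: "(1 - h) * x * m = 1 - h" .
  then have "(1 - h) * x * m * ((1 - h) * x) = (1 - h) * ((1 - h) * x)"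
    by simp
  also have "\<dots> = (1 - h) * x"
    using assms(1) by (simp add: algebra_simps flip: mult.assoc)
  finally have "(1 - h) * x * m * ((1 - h) * x) = (1 - h) * x" .
  then show "regular_elem ((1 - h) * x)"
    unfolding regular_elem_def by blast
  have "(1 - h) * r = (1 - h) * x * (m * r)" for r
    using inv by (simp flip: mult.assoc)
  then show "right_ideal_gen ((1 - h) * x) = right_ideal_gen (1 - h)"
    unfolding right_ideal_gen_def by (auto simp: mult.assoc)
qed

lemma exchange_ring_full_idempotent:
  fixes e Y v :: "'a::ring_1"
  assumes exch: "exchange_ring TYPE('a)"
    and e: "e * e = e" and eY: "e * Y = 0" and Ye: "Y * e = Y"
  obtains h x y m n where "h * h = h" "h = (e + Y) * x + (1 - e - Y * v) * y"
    and "e * m + h * n = 1" and "two_sided_ideal_gen h = UNIV"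
proof -
  define f where "f = 1 - e"
  define u where "u = f - Y * v"
  define h1 where "h1 = e + Y"
  have fY: "f * Y = Y"
    using eY by (simp add: f_def algebra_simps)
  have eu: "e * u = 0"
    using e eY by (simp add: u_def f_def algebra_simps flip: mult.assoc)
  have fu: "f * u = u"
    using eu by (simp add: f_def algebra_simps)
  obtain k r s where k: "k * k = k" "k = u * r" "1 - k = (1 - u) * s"
    using exch unfolding exchange_ring_def by blast
  have ek: "e * k = 0"
    using eu by (simp add: k(2) flip: mult.assoc)
  have YY: "Y * Y = 0" and Yk: "Y * k = 0"
    using eY ek by (metis Ye mult.assoc mult_zero_right)+
  have h1: "h1 * h1 = h1" "h1 * k = 0"
    using e eY Ye YY ek Yk by (simp_all add: h1_def algebra_simps)
  \<comment> \<open>multiply the exchange identity for k by f on the left, using f u = u\<close>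
  have split_one: "1 = e + k + Y * v * s"
  proof -
    have "f - k = f * (1 - k)"
      using ek by (simp add: f_def algebra_simps)
    also have "\<dots> = (f - u) * s"
      using fu by (simp add: k(3) algebra_simps flip: mult.assoc)
    finally show ?thesis
      by (simp add: u_def f_def algebra_simps mult.assoc)
  qed
  define h where "h = h1 + k - k * h1"
  have h: "h * h1 = h1" "h * k = k" "h * h = h"
    using orthogonal_idempotent_join[OF h1(1) k(1) h1(2)] by (simp_all add: h_def)
  have "h = h1 * 1 + u * (r * (1 - h1))"
    by (simp add: h_def k(2) algebra_simps mult.assoc)
  moreover have "e * (1 - v * s) + h * (k + h1 * v * s) = 1"
  proof -
    have "h * (k + h1 * v * s) = k + h1 * v * s"
      using h by (simp add: distrib_left flip: mult.assoc)
    then show ?thesis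
      using split_one by (simp add: h1_def algebra_simps)
  qed
  moreover have "1 \<in> two_sided_ideal_gen h"
  proof -
    have "e * h1 = e" "f * h1 = Y"
      using e eY fY by (simp_all add: h1_def f_def algebra_simps)
    then have "1 = e * h1 + k + f * h1 * v * s"
      using split_one by simp
    also have "\<dots> = e * (h * h1) + h * k + f * (h * h1) * v * s"
      using h by simp
    also have "\<dots> = e * h * h1 + 1 * h * k + f * h * (h1 * v * s)"
      by (simp add: mult.assoc)
    finally have "1 = e * h * h1 + 1 * h * k + f * h * (h1 * v * s)" .
    then show ?thesis
      unfolding two_sided_ideal_gen_def
      by (intro CollectI exI[of _ "[(e, h1), (1, k), (f, h1 * v * s)]"]) (simp add: add.assoc)
  qed
  ultimately show thesis
    using that h(3) two_sided_ideal_gen_eq_UNIV unfolding u_def f_def h1_def by blast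
qed

lemma elem_col_opI:
  fixes xs :: "'a::ring_1 list"
  assumes "i < length xs" "j < length xs" "i \<noteq> j"
  shows "elem_col_op xs (xs[i := xs ! i + xs ! j * r])"
  using assms unfolding elem_col_op_def by blast

lemma elem_col_op_add_multiples:
  fixes xs :: "'a::ring_1 list"
  assumes i: "i < length xs"
  shows "elem_col_op\<^sup>*\<^sup>* xs (map (\<lambda>j. if j = i then xs ! j else xs ! j + xs ! i * w j) [0..<length xs])"
proof -
  define upd where
    "upd S = map (\<lambda>j. if j \<in> S then xs ! j + xs ! i * w j else xs ! j) [0..<length xs]" for S
  have "elem_col_op\<^sup>*\<^sup>* xs (upd S)" if "S \<subseteq> {..<length xs} - {i}" for S
  proof -
    have "finite S"
      using that finite_subset by blast
    then show ?thesis
      using that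
    proof (induction S rule: finite_induct)
      case empty
      then show ?case
        by (simp add: upd_def map_nth)
    next
      case (insert j S)
      have "elem_col_op (upd S) ((upd S)[j := upd S ! j + upd S ! i * w j])"
        using insert.prems i by (intro elem_col_opI) (auto simp: upd_def)
      moreover have "(upd S)[j := upd S ! j + upd S ! i * w j] = upd (insert j S)"
        using insert i by (intro nth_equalityI) (auto simp: upd_def nth_list_update)
      ultimately show ?case
        using insert by (metis insert_subset rtranclp.rtrancl_into_rtrancl)
    qed
  qed
  moreover have "upd ({..<length xs} - {i})
      = map (\<lambda>j. if j = i then xs ! j else xs ! j + xs ! i * w j) [0..<length xs]"
    by (auto simp: upd_def)
  ultimately show ?thesis
    by (metis order_refl)
qed

definition other_columns_span :: "'a::ring_1 list \<Rightarrow> nat \<Rightarrow> 'a set" where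
  "other_columns_span xs i = {\<Sum>j\<in>{..<length xs} - {i}. xs ! j * t j | t. True}"

lemma other_columns_spanI:
  "x = (\<Sum>j\<in>{..<length xs} - {i}. xs ! j * t j) \<Longrightarrow> x \<in> other_columns_span xs i"
  unfolding other_columns_span_def by blast

lemma elem_col_op_add_other_columns:
  fixes xs :: "'a::ring_1 list"
  assumes i: "i < length xs" and y: "y \<in> other_columns_span xs i"
  shows "elem_col_op\<^sup>*\<^sup>* xs (xs[i := xs ! i + y])"
proof -
  obtain t where t: "y = (\<Sum>j\<in>{..<length xs} - {i}. xs ! j * t j)"
    using y unfolding other_columns_span_def by blast
  have "elem_col_op\<^sup>*\<^sup>* xs (xs[i := xs ! i + (\<Sum>j\<in>S. xs ! j * t j)])"
    if "S \<subseteq> {..<length xs} - {i}" for S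
  proof -
    have "finite S"
      using that finite_subset by blast
    then show ?thesis
      using that
    proof (induction S rule: finite_induct)
      case empty
      then show ?case
        by simp
    next
      case (insert j S)
      define ys where "ys = xs[i := xs ! i + (\<Sum>l\<in>S. xs ! l * t l)]"
      have "elem_col_op ys (ys[i := ys ! i + ys ! j * t j])"
        using insert.prems i by (intro elem_col_opI) (auto simp: ys_def)
      moreover have "ys[i := ys ! i + ys ! j * t j] = xs[i := xs ! i + (\<Sum>l\<in>insert j S. xs ! l * t l)]"
        using insert i by (auto simp: ys_def ac_simps)
      ultimately show ?case
        using insert unfolding ys_def by (metis insert_subset rtranclp.rtrancl_into_rtrancl)
    qed
  qed
  then show ?thesis
    unfolding t by blast
qed

lemma column_in_other_columns_span:
  fixes xs :: "'a::ring_1 list"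
  assumes "j < length xs" "j \<noteq> i"
  shows "xs ! j * r \<in> other_columns_span xs i"
proof -
  have "xs ! j * r = (\<Sum>l\<in>{..<length xs} - {i}. xs ! l * (if l = j then r else 0))"
    using assms by (simp add: if_distrib[of "\<lambda>x. _ * x"] cong: if_cong)
  then show ?thesis
    by (rule other_columns_spanI)
qed

lemma other_columns_span_add:
  fixes xs :: "'a::ring_1 list"
  assumes "x \<in> other_columns_span xs i" "y \<in> other_columns_span xs i"
  shows "x + y \<in> other_columns_span xs i"
proof -
  obtain s t where "x = (\<Sum>j\<in>{..<length xs} - {i}. xs ! j * s j)"
    and "y = (\<Sum>j\<in>{..<length xs} - {i}. xs ! j * t j)"
    using assms unfolding other_columns_span_def by blast
  then have "x + y = (\<Sum>j\<in>{..<length xs} - {i}. xs ! j * (s j + t j))"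
    by (simp add: distrib_left sum.distrib)
  then show ?thesis
    by (rule other_columns_spanI)
qed

lemma other_columns_span_mult_right:
  fixes xs :: "'a::ring_1 list"
  assumes "x \<in> other_columns_span xs i"
  shows "x * r \<in> other_columns_span xs i"
proof -
  obtain t where "x = (\<Sum>j\<in>{..<length xs} - {i}. xs ! j * t j)"
    using assms unfolding other_columns_span_def by blast
  then have "x * r = (\<Sum>j\<in>{..<length xs} - {i}. xs ! j * (t j * r))"
    by (simp add: sum_distrib_right mult.assoc)
  then show ?thesis
    by (rule other_columns_spanI)
qed

lemma other_columns_span_diff:
  fixes xs :: "'a::ring_1 list"
  assumes "x \<in> other_columns_span xs i" "y \<in> other_columns_span xs i"
  shows "x - y \<in> other_columns_span xs i"
  using other_columns_span_add[OF assms(1) other_columns_span_mult_right[OF assms(2), of "-1"]]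
  by simp

lemma exchange_ring_unimodular_row_idempotent:
  fixes as :: "'a::ring_1 list"
  assumes "exchange_ring TYPE('a)" "right_unimodular as" "i < length as"
  obtains q p where "as ! i * q * (as ! i * q) = as ! i * q"
    and "1 - as ! i * q = (\<Sum>j\<in>{..<length as} - {i}. as ! j * p j)"
proof -
  obtain rs where "(\<Sum>j<length as. as ! j * rs ! j) = 1"
    using assms(2) unfolding right_unimodular_def by blast
  then have rest: "1 - as ! i * rs ! i = (\<Sum>j\<in>{..<length as} - {i}. as ! j * rs ! j)"
    using assms(3) sum.remove[of "{..<length as}" i "\<lambda>j. as ! j * rs ! j"]
    by (metis add_diff_cancel_left' finite_lessThan lessThan_iff)
  obtain e r s where "e * e = e" "e = as ! i * rs ! i * r" "1 - e = (1 - as ! i * rs ! i) * s"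
    using assms(1) unfolding exchange_ring_def by blast
  moreover from this(3) have "1 - e = (\<Sum>j\<in>{..<length as} - {i}. as ! j * (rs ! j * s))"
    by (simp add: rest sum_distrib_right mult.assoc)
  ultimately show thesis
    using that[of "rs ! i * r" "\<lambda>j. rs ! j * s"] by (simp add: mult.assoc)
qed

lemma exchange_ring_unimodular_row_full_idempotent:
  fixes as :: "'a::ring_1 list"
  assumes exch: "exchange_ring TYPE('a)" and "right_unimodular as"
    and i: "i < length as" and l: "l < length as" "l \<noteq> i"
  obtains ds h m n where "elem_col_op\<^sup>*\<^sup>* as ds" "ds ! i = as ! i" "length ds = length as"
    and "h * h = h" "h \<in> other_columns_span ds i" "as ! i * m + h * n = 1"
    and "two_sided_ideal_gen h = UNIV"
proof -
  define a where "a = as ! i"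
  obtain q p where e_idem: "a * q * (a * q) = a * q"
    and f_sum: "1 - a * q = (\<Sum>j\<in>{..<length as} - {i}. as ! j * p j)"
    using exchange_ring_unimodular_row_idempotent[OF exch assms(2) i] unfolding a_def by metis
  define e where "e = a * q"
  define f where "f = 1 - e"
  have ee: "e * e = e" and ef: "e * f = 0"
    using e_idem by (simp_all add: e_def f_def algebra_simps)
  define ds where "ds = map (\<lambda>j. if j = i then as ! j
      else as ! j + a * (q * ((if j = l then 1 else 0) - as ! j))) [0..<length as]"
  have as_ds: "elem_col_op\<^sup>*\<^sup>* as ds"
    unfolding ds_def a_def using elem_col_op_add_multiples[OF i] .
  have ds_len: "length ds = length as" and ds_i: "ds ! i = a"
    using i by (simp_all add: ds_def a_def)
  have ds_nth: "ds ! j = f * as ! j + (if j = l then e else 0)" if "j < length as" "j \<noteq> i" for j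
  proof -
    have "ds ! j = as ! j + e * ((if j = l then 1 else 0) - as ! j)"
      using that by (simp add: ds_def e_def mult.assoc)
    then show ?thesis
      by (simp add: f_def algebra_simps)
  qed
  define Y where "Y = f * as ! l * e"
  have eY: "e * Y = 0" and Ye: "Y * e = Y"
    by (simp_all add: Y_def ef ee mult.assoc flip: mult.assoc[of e f])
  obtain h x y m n where h: "h * h = h" "h = (e + Y) * x + (1 - e - Y * p l) * y"
    "e * m + h * n = 1" "two_sided_ideal_gen h = UNIV"
    using exchange_ring_full_idempotent[OF exch ee eY Ye] by metis
  have "ds ! l * e = e + Y"
    using l by (simp add: ds_nth Y_def distrib_right ee)
  then have span_l: "e + Y \<in> other_columns_span ds i"
    using l column_in_other_columns_span[of l ds i e] by (simp add: ds_len)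
  have "f + e * p l = f * f + e * p l"
    using ee by (simp add: f_def algebra_simps)
  also have "\<dots> = (\<Sum>j\<in>{..<length as} - {i}. f * (as ! j * p j) + (if j = l then e * p l else 0))"
    using l by (simp add: sum.distrib f_sum[folded e_def f_def] sum_distrib_left)
  also have "\<dots> = (\<Sum>j\<in>{..<length ds} - {i}. ds ! j * p j)"
    by (intro sum.cong) (auto simp: ds_len ds_nth distrib_right mult.assoc)
  finally have "f + e * p l \<in> other_columns_span ds i"
    by (rule other_columns_spanI)
  from other_columns_span_diff[OF this other_columns_span_mult_right[OF span_l, of "p l"]]
  have "1 - e - Y * p l \<in> other_columns_span ds i"
    by (simp add: f_def algebra_simps)
  then have "h \<in> other_columns_span ds i"
    by (simp add: h(2) other_columns_span_add other_columns_span_mult_right span_l)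
  moreover have "a * (q * m) + h * n = 1"
    using h(3) by (simp add: e_def mult.assoc)
  ultimately show thesis
    using that as_ds ds_len ds_i h unfolding a_def by blast
qed

theorem corollary2p6:
  fixes as :: "'a::ring_1 list"
  assumes "exchange_ring TYPE('a)"
    and "right_unimodular as"
    and "length as \<ge> 2"
  shows "\<exists>cs. elem_col_op\<^sup>*\<^sup>* as cs \<and>
           regular_elem (cs ! 1) \<and>
           (\<exists>t. cs ! 1 = t * as ! 1) \<and>
           (\<exists>g. idempotent g \<and> two_sided_ideal_gen g = UNIV \<and>
                right_ideal_gen (cs ! 1) = right_ideal_gen (1 - g))"
proof -
  have len: "1 < length as" "0 < length as"
    using assms(3) by auto
  obtain ds h m n where as_ds: "elem_col_op\<^sup>*\<^sup>* as ds"
    and ds: "ds ! 1 = as ! 1" "length ds = length as"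
    and h: "h * h = h" "h \<in> other_columns_span ds 1"
    and comaximal: "as ! 1 * m + h * n = 1" and full: "two_sided_ideal_gen h = UNIV"
    by (rule exchange_ring_unimodular_row_full_idempotent[OF assms(1,2) len zero_neq_one])
  define cs where "cs = ds[1 := (1 - h) * as ! 1]"
  have "ds ! 1 + h * - as ! 1 = (1 - h) * as ! 1"
    using ds by (simp add: algebra_simps)
  then have "elem_col_op\<^sup>*\<^sup>* ds cs"
    using elem_col_op_add_other_columns[OF _ other_columns_span_mult_right[OF h(2)], of "- as ! 1"]
      ds len unfolding cs_def by simp
  with as_ds have "elem_col_op\<^sup>*\<^sup>* as cs"
    by (rule rtranclp_trans)
  moreover have "cs ! 1 = (1 - h) * as ! 1"
    using ds len by (simp add: cs_def)
  ultimately show ?thesis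
    using regular_complement_mult[OF h(1) comaximal] h(1) full unfolding idempotent_def
    by (intro exI[of _ cs]) (auto intro: exI[of _ h])
qed

end
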